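(* Let $2<p<4$, $b>0$, assume (V), fix $k\in\mathbb{N}$ and $\mathbf{r}_k\in\Lambda_k$. Let $(u_1,\dots,u_{k+1})\in\mathbf{H}_k$ satisfy, for every $i=1,\dots,k+1$, $$(4-p)\int_{B_i}|u_i|^pdx<2\|u_i\|_i^2$$ and $$\|u_i\|_i^2+b\Big(\int_{B_i}|\nabla u_i|^2dx\Big)^2+b\int_{B_i}|\nabla u_i|^2dx\sum_{j\ne i}\int_{B_j}|\nabla u_j|^2dx\le\int_{B_i}|u_i|^pdx.$$ Then there exists a unique $(k+1)$-tuple $(\widehat t_1,\dots,\widehat t_{k+1})$ of positive numbers with $\widehat t_i\le1$ for all $i$ such that $(\widehat t_1u_1,\dots,\widehat t_{k+1}u_{k+1})\in N_k^-$. Moreover, $$E_b(\widehat t_1u_1,\dots,\widehat t_{k+1}u_{k+1})=\max_{0\le t_i\le1,\ i=1,\dots,k+1}E_b(t_1u_1,\dots,t_{k+1}u_{k+1}).$$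
   Context: Condition (V): $V$ is continuous, radial, and $\inf_{\mathbb{R}^3}V=V_0>0$. $\Lambda_k:=\{(r_1,\dots,r_k):0=:r_0<r_1<\dots<r_k<r_{k+1}:=\infty\}$; $B_i:=\{r_{i-1}<|x|<r_i\}\subset\mathbb{R}^3$. $\mathcal{H}_i$ is the space of radial $H^1_0(B_i)$ functions (extended by $0$ outside $B_i$) with norm $\|u\|_i^2=\int_{B_i}(|\nabla u|^2+V(|x|)u^2)dx$; $\mathbf{H}_k:=\mathcal{H}_1\times\dots\times\mathcal{H}_{k+1}$. $E_b(u_1,\dots,u_{k+1}):=\frac12\sum_i\|u_i\|_i^2+\frac b4\big(\sum_i\int_{B_i}|\nabla u_i|^2\big)^2-\frac1p\sum_i\int_{B_i}|u_i|^p$. $N_k^-$ is the set of $(u_1,\dots,u_{k+1})\in\mathbf{H}_k$ with, for all $i$: $u_i\ne0$, $\|u_i\|_i^2+b\big(\int_{B_i}|\nabla u_i|^2\big)^2+b\int_{B_i}|\nabla u_i|^2\sum_{j\ne i}\int_{B_j}|\nabla u_j|^2=\int_{B_i}|u_i|^p$, and $(4-p)\int_{B_i}|u_i|^p<2\|u_i\|_i^2$. *)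

theory Defs
  imports "HOL-Analysis.Analysis"
begin

text \<open>Radii r_0 = 0 < r_1 < ... < r_k (and r_(k+1) = infinity implicitly).\<close>
definition Lambda :: "nat \<Rightarrow> (nat \<Rightarrow> real) \<Rightarrow> bool" where
  "Lambda k r \<longleftrightarrow> r 0 = 0 \<and> (\<forall>i<k. r i < r (Suc i))"

definition annulus :: "nat \<Rightarrow> (nat \<Rightarrow> real) \<Rightarrow> nat \<Rightarrow> (real^3) set" where
  "annulus k r i = (if i = k + 1 then {x. r (i - 1) < norm x}
                    else {x. r (i - 1) < norm x \<and> norm x < r i})"

definition test_fun :: "(real^3) set \<Rightarrow> (real^3 \<Rightarrow> real) \<Rightarrow> (real^3 \<Rightarrow> real^3) \<Rightarrow> bool" where
  "test_fun B \<phi> D \<longleftrightarrow>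
     (\<forall>x. (\<phi> has_derivative (\<lambda>h. D x \<bullet> h)) (at x)) \<and> continuous_on UNIV D \<and>
     compact (closure {x. \<phi> x \<noteq> 0}) \<and> closure {x. \<phi> x \<noteq> 0} \<subseteq> B"

text \<open>H_sp V B u G: u is a radial element of H^1_0(B) (extended by 0 outside B),
  the closure of compactly supported test functions in the norm
  (int_B |grad w|^2 + V w^2)^(1/2), and G is its (weak) gradient.\<close>
definition H_sp :: "(real^3 \<Rightarrow> real) \<Rightarrow> (real^3) set \<Rightarrow> (real^3 \<Rightarrow> real) \<Rightarrow> (real^3 \<Rightarrow> real^3) \<Rightarrow> bool" where
  "H_sp V B u G \<longleftrightarrow>
     u \<in> borel_measurable lborel \<and> G \<in> borel_measurable lborel \<and>
     (\<forall>x. x \<notin> B \<longrightarrow> u x = 0) \<and>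
     (\<forall>x y. norm x = norm y \<longrightarrow> u x = u y) \<and>
     set_integrable lborel B (\<lambda>x. (norm (G x))\<^sup>2) \<and>
     set_integrable lborel B (\<lambda>x. V x * (u x)\<^sup>2) \<and>
     (\<exists>\<phi> D. (\<forall>n. test_fun B (\<phi> n) (D n) \<and>
                 set_integrable lborel B (\<lambda>x. (norm (D n x - G x))\<^sup>2 + V x * (\<phi> n x - u x)\<^sup>2)) \<and>
             (\<lambda>n. LINT x:B|lborel. (norm (D n x - G x))\<^sup>2 + V x * (\<phi> n x - u x)\<^sup>2)
               \<longlonglongrightarrow> 0)"

definition nrm_sq :: "(real^3 \<Rightarrow> real) \<Rightarrow> (real^3) set \<Rightarrow> (real^3 \<Rightarrow> real) \<Rightarrow> (real^3 \<Rightarrow> real^3) \<Rightarrow> real" where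
  "nrm_sq V B u G = (LINT x:B|lborel. (norm (G x))\<^sup>2 + V x * (u x)\<^sup>2)"

definition grad_sq :: "(real^3) set \<Rightarrow> (real^3 \<Rightarrow> real^3) \<Rightarrow> real" where
  "grad_sq B G = (LINT x:B|lborel. (norm (G x))\<^sup>2)"

definition Lp_int :: "real \<Rightarrow> (real^3) set \<Rightarrow> (real^3 \<Rightarrow> real) \<Rightarrow> real" where
  "Lp_int p B u = (LINT x:B|lborel. \<bar>u x\<bar> powr p)"

definition H_k :: "(real^3 \<Rightarrow> real) \<Rightarrow> nat \<Rightarrow> (nat \<Rightarrow> real) \<Rightarrow>
    (nat \<Rightarrow> real^3 \<Rightarrow> real) \<Rightarrow> (nat \<Rightarrow> real^3 \<Rightarrow> real^3) \<Rightarrow> bool" where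
  "H_k V k r u G \<longleftrightarrow> (\<forall>i\<in>{1..k+1}. H_sp V (annulus k r i) (u i) (G i))"

definition E_b :: "(real^3 \<Rightarrow> real) \<Rightarrow> real \<Rightarrow> real \<Rightarrow> nat \<Rightarrow> (nat \<Rightarrow> real) \<Rightarrow>
    (nat \<Rightarrow> real^3 \<Rightarrow> real) \<Rightarrow> (nat \<Rightarrow> real^3 \<Rightarrow> real^3) \<Rightarrow> real" where
  "E_b V b p k r u G =
     1/2 * (\<Sum>i=1..k+1. nrm_sq V (annulus k r i) (u i) (G i))
     + b/4 * (\<Sum>i=1..k+1. grad_sq (annulus k r i) (G i))\<^sup>2
     - 1/p * (\<Sum>i=1..k+1. Lp_int p (annulus k r i) (u i))"

definition N_minus :: "(real^3 \<Rightarrow> real) \<Rightarrow> real \<Rightarrow> real \<Rightarrow> nat \<Rightarrow> (nat \<Rightarrow> real) \<Rightarrow>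
    (nat \<Rightarrow> real^3 \<Rightarrow> real) \<Rightarrow> (nat \<Rightarrow> real^3 \<Rightarrow> real^3) \<Rightarrow> bool" where
  "N_minus V b p k r u G \<longleftrightarrow> H_k V k r u G \<and>
     (\<forall>i\<in>{1..k+1}.
        \<not> (AE x in lborel. u i x = 0) \<and>
        nrm_sq V (annulus k r i) (u i) (G i) + b * (grad_sq (annulus k r i) (G i))\<^sup>2
          + b * grad_sq (annulus k r i) (G i) *
              (\<Sum>j\<in>{1..k+1} - {i}. grad_sq (annulus k r j) (G j))
          = Lp_int p (annulus k r i) (u i) \<and>
        (4 - p) * Lp_int p (annulus k r i) (u i) < 2 * nrm_sq V (annulus k r i) (u i) (G i))"

definition scU :: "(nat \<Rightarrow> real) \<Rightarrow> (nat \<Rightarrow> real^3 \<Rightarrow> real) \<Rightarrow> nat \<Rightarrow> real^3 \<Rightarrow> real" where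
  "scU t u = (\<lambda>i x. t i * u i x)"
definition scG :: "(nat \<Rightarrow> real) \<Rightarrow> (nat \<Rightarrow> real^3 \<Rightarrow> real^3) \<Rightarrow> nat \<Rightarrow> real^3 \<Rightarrow> real^3" where
  "scG t G = (\<lambda>i x. t i *\<^sub>R G i x)"

end

theory Submission
  imports Defs
begin

text \<open>
  With x_i = t_i^2 and the coefficients a_i = ||u_i||_i^2, c_i = int |grad u_i|^2 and
  d_i = int |u_i|^p, the energy along the fibre becomes
  F(x) = 1/2 sum a_i x_i + b/4 (sum c_i x_i)^2 - 1/p sum d_i x_i^(p/2),
  and N_k^- consists of the critical points of F. The two hypotheses give
  b c_i (sum c_j) <= (p/2 - 1) d_i; by Cauchy-Schwarz the strict concavity of the last term on
  [0,1]^(k+1) then outweighs the convex middle term, so F is strictly concave there and a critical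
  point in (0,1]^(k+1) is its unique maximiser on [0,1]^(k+1).
  Such a point exists by the intermediate value theorem in the single variable S = sum c_j x_j,
  since the Nehari equations determine every x_i from S.
\<close>

lemma powr_minus_linear_strict_mono:
  fixes \<theta> z\<^sub>1 z\<^sub>2 :: real
  assumes "0 < \<theta>" "\<theta> < 1" "0 \<le> z\<^sub>1" "z\<^sub>1 < z\<^sub>2" "z\<^sub>2 \<le> 1"
  shows "z\<^sub>1 powr \<theta> - \<theta> * z\<^sub>1 < z\<^sub>2 powr \<theta> - \<theta> * z\<^sub>2"
proof (rule DERIV_pos_imp_increasing_open[OF assms(4)])
  fix z assume z: "z\<^sub>1 < z" "z < z\<^sub>2"
  have "1 < z powr (\<theta> - 1)"
    using powr_less_mono2_neg[of "\<theta> - 1" z 1] z assms by simp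
  moreover have "((\<lambda>z. z powr \<theta> - \<theta> * z) has_real_derivative \<theta> * z powr (\<theta> - 1) - \<theta>) (at z)"
    using z assms by (auto intro!: derivative_eq_intros)
  ultimately show "\<exists>y. ((\<lambda>z. z powr \<theta> - \<theta> * z) has_real_derivative y) (at z) \<and> 0 < y"
    using assms by force
next
  show "continuous_on {z\<^sub>1..z\<^sub>2} (\<lambda>z. z powr \<theta> - \<theta> * z)"
    using assms by (intro continuous_intros continuous_on_powr') auto
qed

lemma powr_tangent_gap_gt:
  fixes q x y :: real
  assumes q: "1 < q" "q < 2" and x: "0 < x" "x \<le> 1" and y: "0 \<le> y" "y \<le> 1" "y \<noteq> x"
  shows "(q - 1) / 2 * (y - x)\<^sup>2 < (y powr q - x powr q) / q - x powr (q - 1) * (y - x)"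
proof -
  define \<psi> where "\<psi> z = z powr (q - 1) - (q - 1) * z" for z
  define \<phi> where "\<phi> z = z powr q / q - x powr (q - 1) * z - (q - 1) / 2 * (z - x)\<^sup>2" for z
  have \<phi>_deriv: "(\<phi> has_real_derivative \<psi> z - \<psi> x) (at z)" if "0 < z" for z
  proof -
    have "(\<phi> has_real_derivative
            q * z powr (q - 1) / q - x powr (q - 1) - (q - 1) / 2 * (2 * (z - x))) (at z)"
      unfolding \<phi>_def using that q by (auto intro!: derivative_eq_intros)
    then show ?thesis by (rule DERIV_cong) (use q in \<open>simp add: \<psi>_def field_simps\<close>)
  qed
  have \<phi>_cont: "continuous_on A \<phi>" if "A \<subseteq> {0..}" for A
    unfolding \<phi>_def using that q by (intro continuous_intros continuous_on_powr') auto
  have \<psi>_less: "\<psi> z\<^sub>1 < \<psi> z\<^sub>2" if "0 \<le> z\<^sub>1" "z\<^sub>1 < z\<^sub>2" "z\<^sub>2 \<le> 1" for z\<^sub>1 z\<^sub>2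
    unfolding \<psi>_def using powr_minus_linear_strict_mono[of "q - 1" z\<^sub>1 z\<^sub>2] that q by simp
  have "\<phi> x < \<phi> y"
  proof (cases "x < y")
    case True
    show ?thesis
    proof (rule DERIV_pos_imp_increasing_open[OF True])
      fix z assume "x < z" "z < y"
      then show "\<exists>d. (\<phi> has_real_derivative d) (at z) \<and> 0 < d"
        using \<phi>_deriv[of z] \<psi>_less[of x z] x y by auto
    qed (use \<phi>_cont x in auto)
  next
    case False
    with y have "y < x" by simp
    then show ?thesis
    proof (rule DERIV_neg_imp_decreasing_open)
      fix z assume "y < z" "z < x"
      then show "\<exists>d. (\<phi> has_real_derivative d) (at z) \<and> d < 0"
        using \<phi>_deriv[of z] \<psi>_less[of z x] x y by auto
    qed (use \<phi>_cont y in auto)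
  qed
  then show ?thesis
    unfolding \<phi>_def by (simp add: diff_divide_distrib algebra_simps)
qed

lemma weighted_Cauchy_Schwarz:
  fixes c w :: "'a \<Rightarrow> real"
  assumes "\<forall>i\<in>I. 0 \<le> c i"
  shows "(\<Sum>i\<in>I. c i * w i)\<^sup>2 \<le> (\<Sum>i\<in>I. c i) * (\<Sum>i\<in>I. c i * (w i)\<^sup>2)"
proof -
  have "(\<Sum>i\<in>I. sqrt (c i) * (sqrt (c i) * w i))\<^sup>2
          \<le> (\<Sum>i\<in>I. (sqrt (c i))\<^sup>2) * (\<Sum>i\<in>I. (sqrt (c i) * w i)\<^sup>2)"
    by (rule Cauchy_Schwarz_ineq_sum)
  also have "\<dots> = (\<Sum>i\<in>I. c i) * (\<Sum>i\<in>I. c i * (w i)\<^sup>2)"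
    using assms by (auto simp: power_mult_distrib intro!: arg_cong2[where f = "(*)"] sum.cong)
  finally show ?thesis
    using assms by (simp add: mult.assoc[symmetric] cong: sum.cong)
qed

definition reduced_energy ::
    "real \<Rightarrow> real \<Rightarrow> nat set \<Rightarrow> (nat \<Rightarrow> real) \<Rightarrow> (nat \<Rightarrow> real) \<Rightarrow> (nat \<Rightarrow> real) \<Rightarrow>
     (nat \<Rightarrow> real) \<Rightarrow> real"
  where "reduced_energy b p I a c d x =
     1/2 * (\<Sum>i\<in>I. a i * x i) + b/4 * (\<Sum>i\<in>I. c i * x i)\<^sup>2 - 1/p * (\<Sum>i\<in>I. d i * x i powr (p/2))"

text \<open>The i-th Nehari identity of N_k^- along the fibre, divided by x_i.\<close>

definition reduced_nehari ::
    "real \<Rightarrow> real \<Rightarrow> nat set \<Rightarrow> (nat \<Rightarrow> real) \<Rightarrow> (nat \<Rightarrow> real) \<Rightarrow> (nat \<Rightarrow> real) \<Rightarrow>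
     (nat \<Rightarrow> real) \<Rightarrow> bool"
  where "reduced_nehari b p I a c d x \<longleftrightarrow>
     (\<forall>i\<in>I. 0 < x i \<and> a i + b * c i * (\<Sum>j\<in>I. c j * x j) = d i * x i powr (p/2 - 1))"

lemma reduced_energy_cong:
  "(\<And>i. i \<in> I \<Longrightarrow> x i = y i) \<Longrightarrow> reduced_energy b p I a c d x = reduced_energy b p I a c d y"
  unfolding reduced_energy_def by (simp cong: sum.cong)

lemma reduced_nehari_cong:
  "(\<And>i. i \<in> I \<Longrightarrow> x i = y i) \<Longrightarrow> reduced_nehari b p I a c d x = reduced_nehari b p I a c d y"
  unfolding reduced_nehari_def by (simp cong: sum.cong)

lemma reduced_nehari_exists:
  assumes "finite I" "0 \<le> b" "2 < p"
    and c: "\<forall>i\<in>I. 0 \<le> c i" and a: "\<forall>i\<in>I. 0 < a i" and d: "\<forall>i\<in>I. 0 < d i"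
    and le: "\<forall>i\<in>I. a i + b * c i * (\<Sum>j\<in>I. c j) \<le> d i"
  shows "\<exists>x. reduced_nehari b p I a c d x \<and> (\<forall>i\<in>I. x i \<le> 1)"
proof -
  define \<theta> where "\<theta> = p/2 - 1"
  define C where "C = (\<Sum>j\<in>I. c j)"
  define x where "x S i = ((a i + b * c i * S) / d i) powr (1 / \<theta>)" for S i
  define g where "g S = (\<Sum>i\<in>I. c i * x S i) - S" for S
  have \<theta>: "0 < \<theta>" using assms unfolding \<theta>_def by simp
  have C: "0 \<le> C" unfolding C_def using c by (simp add: sum_nonneg)
  have base_pos: "0 < (a i + b * c i * S) / d i" if "i \<in> I" "0 \<le> S" for i S
    using assms that by (intro divide_pos_pos add_pos_nonneg) auto
  have base_le: "(a i + b * c i * S) / d i \<le> 1" if "i \<in> I" "S \<le> C" for i S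
  proof -
    have "b * c i * S \<le> b * c i * C" using assms that by (intro mult_left_mono) auto
    moreover have "a i + b * c i * C \<le> d i" using le that unfolding C_def by blast
    ultimately show ?thesis using d that by (simp add: pos_divide_le_eq)
  qed
  have x_le: "x S i \<le> 1" if "i \<in> I" "0 \<le> S" "S \<le> C" for i S
    unfolding x_def using base_pos[OF that(1,2)] base_le[OF that(1,3)] \<theta> by (intro powr_le1) auto
  have "continuous_on {0..C} g"
    unfolding g_def x_def using base_pos \<theta>
    by (intro continuous_intros continuous_on_powr') (fastforce intro: less_imp_le)+
  moreover have "0 \<le> g 0" unfolding g_def x_def using c by (simp add: sum_nonneg)
  moreover have "g C \<le> 0"
  proof -
    have "(\<Sum>i\<in>I. c i * x C i) \<le> (\<Sum>i\<in>I. c i)"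
      using c x_le C by (intro sum_mono mult_right_le_one_le) (auto simp: x_def)
    then show ?thesis unfolding g_def C_def by simp
  qed
  ultimately obtain S where S: "0 \<le> S" "S \<le> C" "g S = 0"
    using IVT2'[of g C 0 0] C by auto
  have "reduced_nehari b p I a c d (x S)"
    unfolding reduced_nehari_def
  proof
    fix i assume i: "i \<in> I"
    have "x S i powr \<theta> = (a i + b * c i * S) / d i"
      unfolding x_def using base_pos[OF i S(1)] \<theta>
      by (simp add: powr_powr powr_one less_imp_le del: powr_one')
    moreover have "(\<Sum>j\<in>I. c j * x S j) = S" using S(3) unfolding g_def by simp
    moreover have "0 < x S i"
      unfolding x_def using base_pos[OF i S(1)] by (metis powr_gt_zero less_irrefl)
    ultimately show "0 < x S i \<and> a i + b * c i * (\<Sum>j\<in>I. c j * x S j) = d i * x S i powr (p/2 - 1)"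
      using d i unfolding \<theta>_def by force
  qed
  with x_le S show ?thesis by blast
qed

lemma reduced_energy_diff_nehari:
  assumes x: "reduced_nehari b p I a c d x"
  shows "reduced_energy b p I a c d x - reduced_energy b p I a c d y =
    1/2 * (\<Sum>i\<in>I. d i *
      ((y i powr (p/2) - x i powr (p/2)) / (p/2) - x i powr (p/2 - 1) * (y i - x i)))
    - b/4 * (\<Sum>i\<in>I. c i * (y i - x i))\<^sup>2"
proof -
  define S where "S = (\<Sum>i\<in>I. c i * x i)"
  define T where "T = (\<Sum>i\<in>I. c i * y i)"
  have TS: "(\<Sum>i\<in>I. c i * (y i - x i)) = T - S"
    unfolding S_def T_def by (simp add: right_diff_distrib sum_subtractf)
  have "d i * ((y i powr (p/2) - x i powr (p/2)) / (p/2) - x i powr (p/2 - 1) * (y i - x i))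
      = 2 * (1/p * (d i * y i powr (p/2))) - 2 * (1/p * (d i * x i powr (p/2)))
        - (a i * y i - a i * x i) - b * S * (c i * (y i - x i))" if "i \<in> I" for i
  proof -
    have "d i * x i powr (p/2 - 1) = a i + b * S * c i"
      using x that unfolding reduced_nehari_def S_def by (simp add: algebra_simps)
    then have "d i * ((y i powr (p/2) - x i powr (p/2)) / (p/2) - x i powr (p/2 - 1) * (y i - x i))
        = d i * (y i powr (p/2) - x i powr (p/2)) / (p/2) - (a i + b * S * c i) * (y i - x i)"
      by (simp add: right_diff_distrib mult.assoc[symmetric])
    then show ?thesis by (simp add: algebra_simps diff_divide_distrib)
  qed
  then have gaps: "(\<Sum>i\<in>I. d i *
        ((y i powr (p/2) - x i powr (p/2)) / (p/2) - x i powr (p/2 - 1) * (y i - x i)))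
      = 2 * (1/p * (\<Sum>i\<in>I. d i * y i powr (p/2))) - 2 * (1/p * (\<Sum>i\<in>I. d i * x i powr (p/2)))
        - ((\<Sum>i\<in>I. a i * y i) - (\<Sum>i\<in>I. a i * x i)) - b * S * (T - S)"
    unfolding TS[symmetric] by (simp add: sum_subtractf sum_distrib_left cong: sum.cong)
  show ?thesis
    unfolding gaps TS reduced_energy_def S_def[symmetric] T_def[symmetric]
    by (simp add: power2_eq_square algebra_simps)
qed

lemma reduced_energy_less_nehari:
  assumes "finite I" "0 \<le> b" "2 < p" "p < 4"
    and c: "\<forall>i\<in>I. 0 \<le> c i" and d: "\<forall>i\<in>I. 0 < d i"
    and concave: "\<forall>i\<in>I. 2 * b * c i * (\<Sum>j\<in>I. c j) \<le> (p - 2) * d i"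
    and x: "reduced_nehari b p I a c d x" "\<forall>i\<in>I. x i \<le> 1"
    and y: "\<forall>i\<in>I. 0 \<le> y i \<and> y i \<le> 1" and differ: "\<exists>i\<in>I. y i \<noteq> x i"
  shows "reduced_energy b p I a c d y < reduced_energy b p I a c d x"
proof -
  define gap where
    "gap i = (y i powr (p/2) - x i powr (p/2)) / (p/2) - x i powr (p/2 - 1) * (y i - x i)" for i
  define Q where "Q = (\<Sum>i\<in>I. d i * (y i - x i)\<^sup>2)"
  define K where "K = (\<Sum>i\<in>I. c i * (y i - x i))"
  have q: "1 < p/2" "p/2 < 2" using assms by auto
  have x_pos: "\<forall>i\<in>I. 0 < x i" using x unfolding reduced_nehari_def by blast
  have gap_gt: "(p/2 - 1) / 2 * (y i - x i)\<^sup>2 < gap i" if "i \<in> I" "y i \<noteq> x i" for i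
    unfolding gap_def using powr_tangent_gap_gt[OF q, of "x i" "y i"] x_pos x y that by auto
  have gap_ge: "(p/2 - 1) / 2 * (y i - x i)\<^sup>2 \<le> gap i" if "i \<in> I" for i
    using gap_gt[OF that] by (cases "y i = x i") (auto simp: gap_def)
  have "(\<Sum>i\<in>I. d i * ((p/2 - 1) / 2 * (y i - x i)\<^sup>2)) < (\<Sum>i\<in>I. d i * gap i)"
  proof (rule sum_strict_mono_ex1[OF \<open>finite I\<close>])
    show "\<forall>i\<in>I. d i * ((p/2 - 1) / 2 * (y i - x i)\<^sup>2) \<le> d i * gap i"
      using gap_ge d by (simp add: less_imp_le mult_left_mono)
    show "\<exists>i\<in>I. d i * ((p/2 - 1) / 2 * (y i - x i)\<^sup>2) < d i * gap i"
      using gap_gt d differ by auto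
  qed
  then have gap_sum: "(p/2 - 1) / 2 * Q < (\<Sum>i\<in>I. d i * gap i)"
    unfolding Q_def by (simp add: sum_distrib_left mult.left_commute)
  define C where "C = (\<Sum>j\<in>I. c j)"
  have "b * K\<^sup>2 \<le> b * (C * (\<Sum>i\<in>I. c i * (y i - x i)\<^sup>2))"
    unfolding K_def C_def using weighted_Cauchy_Schwarz[OF c] \<open>0 \<le> b\<close> by (rule mult_left_mono)
  also have "\<dots> = (\<Sum>i\<in>I. (b * c i * C) * (y i - x i)\<^sup>2)"
    by (simp add: sum_distrib_left mult_ac)
  also have "\<dots> \<le> (\<Sum>i\<in>I. ((p/2 - 1) * d i) * (y i - x i)\<^sup>2)"
    using concave unfolding C_def by (intro sum_mono mult_right_mono) (auto simp: algebra_simps)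
  also have "\<dots> = (p/2 - 1) * Q"
    unfolding Q_def by (simp add: sum_distrib_left mult_ac)
  finally have "b * K\<^sup>2 \<le> (p/2 - 1) * Q" .
  moreover have "reduced_energy b p I a c d x - reduced_energy b p I a c d y
      = 1/2 * (\<Sum>i\<in>I. d i * gap i) - b/4 * K\<^sup>2"
    unfolding gap_def K_def using reduced_energy_diff_nehari[OF x(1)] q by simp
  moreover have "(p/2 - 1) * Q < 2 * (\<Sum>i\<in>I. d i * gap i)"
    using gap_sum by (simp add: field_simps)
  ultimately show ?thesis by (simp add: field_simps)
qed

lemma reduced_energy_le_nehari:
  assumes "finite I" "0 \<le> b" "2 < p" "p < 4"
    and "\<forall>i\<in>I. 0 \<le> c i" "\<forall>i\<in>I. 0 < d i"
    and "\<forall>i\<in>I. 2 * b * c i * (\<Sum>j\<in>I. c j) \<le> (p - 2) * d i"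
    and "reduced_nehari b p I a c d x" "\<forall>i\<in>I. x i \<le> 1"
    and "\<forall>i\<in>I. 0 \<le> y i \<and> y i \<le> 1"
  shows "reduced_energy b p I a c d y \<le> reduced_energy b p I a c d x"
proof (cases "\<exists>i\<in>I. y i \<noteq> x i")
  case True
  then show ?thesis using reduced_energy_less_nehari[OF assms] by simp
next
  case False
  then show ?thesis using reduced_energy_cong[of I y x] by auto
qed

lemma reduced_nehari_unique:
  assumes "finite I" "0 \<le> b" "2 < p" "p < 4"
    and "\<forall>i\<in>I. 0 \<le> c i" "\<forall>i\<in>I. 0 < d i"
    and "\<forall>i\<in>I. 2 * b * c i * (\<Sum>j\<in>I. c j) \<le> (p - 2) * d i"
    and x: "reduced_nehari b p I a c d x" "\<forall>i\<in>I. x i \<le> 1"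
    and z: "reduced_nehari b p I a c d z" "\<forall>i\<in>I. z i \<le> 1"
  shows "\<forall>i\<in>I. z i = x i"
proof (rule ccontr)
  assume "\<not> (\<forall>i\<in>I. z i = x i)"
  then have "\<exists>i\<in>I. z i \<noteq> x i" "\<exists>i\<in>I. x i \<noteq> z i" by (auto simp: eq_commute)
  moreover have "\<forall>i\<in>I. 0 \<le> x i \<and> x i \<le> 1" "\<forall>i\<in>I. 0 \<le> z i \<and> z i \<le> 1"
    using x z unfolding reduced_nehari_def by (auto simp: less_imp_le)
  ultimately have "reduced_energy b p I a c d z < reduced_energy b p I a c d x"
    "reduced_energy b p I a c d x < reduced_energy b p I a c d z"
    using reduced_energy_less_nehari[OF assms(1-7)] x z by blast+
  then show False by simp
qed

lemma reduced_coefficients_pos: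
  fixes a c d :: "'a \<Rightarrow> real"
  assumes "0 \<le> b" "p < 4" and c: "\<forall>i\<in>I. 0 \<le> c i" and d: "\<forall>i\<in>I. 0 \<le> d i"
    and minus: "\<forall>i\<in>I. (4 - p) * d i < 2 * a i"
    and le: "\<forall>i\<in>I. a i + b * c i * (\<Sum>j\<in>I. c j) \<le> d i"
  shows "\<forall>i\<in>I. 0 < a i \<and> 0 < d i"
proof
  fix i assume i: "i \<in> I"
  have "0 \<le> (4 - p) * d i" using d i \<open>p < 4\<close> by simp
  then have "0 < a i" using minus i by fastforce
  moreover have "0 \<le> b * c i * (\<Sum>j\<in>I. c j)" using c i \<open>0 \<le> b\<close> by (simp add: sum_nonneg)
  ultimately show "0 < a i \<and> 0 < d i" using le i by fastforce
qed

lemma reduced_nehari_minus_max: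
  assumes "finite I" "0 \<le> b" "2 < p" "p < 4"
    and c: "\<forall>i\<in>I. 0 \<le> c i" and d: "\<forall>i\<in>I. 0 \<le> d i"
    and minus: "\<forall>i\<in>I. (4 - p) * d i < 2 * a i"
    and le: "\<forall>i\<in>I. a i + b * c i * (\<Sum>j\<in>I. c j) \<le> d i"
  shows "\<exists>x. reduced_nehari b p I a c d x \<and> (\<forall>i\<in>I. x i \<le> 1) \<and>
           (\<forall>i\<in>I. (4 - p) * (d i * x i powr (p/2)) < 2 * (a i * x i)) \<and>
           (\<forall>z. reduced_nehari b p I a c d z \<and> (\<forall>i\<in>I. z i \<le> 1) \<longrightarrow> (\<forall>i\<in>I. z i = x i)) \<and>
           (\<forall>y. (\<forall>i\<in>I. 0 \<le> y i \<and> y i \<le> 1) \<longrightarrow>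
                reduced_energy b p I a c d y \<le> reduced_energy b p I a c d x)"
proof -
  have a_pos: "\<forall>i\<in>I. 0 < a i" and d_pos: "\<forall>i\<in>I. 0 < d i"
    using reduced_coefficients_pos[OF assms(2,4) c d minus le] by auto
  have concave: "\<forall>i\<in>I. 2 * b * c i * (\<Sum>j\<in>I. c j) \<le> (p - 2) * d i"
    using minus le by (force simp: algebra_simps)
  obtain x where x: "reduced_nehari b p I a c d x" "\<forall>i\<in>I. x i \<le> 1"
    using reduced_nehari_exists[OF assms(1-3) c a_pos d_pos le] by blast
  have "(4 - p) * (d i * x i powr (p/2)) < 2 * (a i * x i)" if "i \<in> I" for i
  proof -
    have x_pos: "0 < x i" using x that unfolding reduced_nehari_def by blast
    have "x i powr (p/2) \<le> x i"
      using powr_le_one_le[OF x_pos] x that \<open>2 < p\<close> by simp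
    then have "(4 - p) * (d i * x i powr (p/2)) \<le> (4 - p) * d i * x i"
      using d that \<open>p < 4\<close> by (simp add: mult_left_mono)
    also have "\<dots> < 2 * (a i * x i)"
      using minus that x_pos by simp
    finally show ?thesis .
  qed
  with x show ?thesis
    using reduced_nehari_unique[OF assms(1-4) c d_pos concave x]
      reduced_energy_le_nehari[OF assms(1-4) c d_pos concave x] by blast
qed

lemma reduced_fibre_maximiser:
  assumes "finite I" "0 \<le> b" "2 < p" "p < 4"
    and "\<forall>i\<in>I. 0 \<le> c i" "\<forall>i\<in>I. 0 \<le> d i"
    and "\<forall>i\<in>I. (4 - p) * d i < 2 * a i"
    and "\<forall>i\<in>I. a i + b * c i * (\<Sum>j\<in>I. c j) \<le> d i"
  shows "\<exists>t. (\<forall>i\<in>I. 0 < t i \<and> t i \<le> 1) \<and> reduced_nehari b p I a c d (\<lambda>i. (t i)\<^sup>2) \<and>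
           (\<forall>i\<in>I. (4 - p) * (d i * ((t i)\<^sup>2) powr (p/2)) < 2 * (a i * (t i)\<^sup>2)) \<and>
           (\<forall>s. (\<forall>i\<in>I. 0 < s i \<and> s i \<le> 1) \<and> reduced_nehari b p I a c d (\<lambda>i. (s i)\<^sup>2)
                \<longrightarrow> (\<forall>i\<in>I. s i = t i)) \<and>
           (\<forall>s. (\<forall>i\<in>I. 0 \<le> s i \<and> s i \<le> 1) \<longrightarrow>
                reduced_energy b p I a c d (\<lambda>i. (s i)\<^sup>2) \<le> reduced_energy b p I a c d (\<lambda>i. (t i)\<^sup>2))"
proof -
  obtain x where x: "reduced_nehari b p I a c d x" "\<forall>i\<in>I. x i \<le> 1"
      "\<forall>i\<in>I. (4 - p) * (d i * x i powr (p/2)) < 2 * (a i * x i)"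
    and unique: "\<forall>z. reduced_nehari b p I a c d z \<and> (\<forall>i\<in>I. z i \<le> 1) \<longrightarrow> (\<forall>i\<in>I. z i = x i)"
    and max: "\<forall>y. (\<forall>i\<in>I. 0 \<le> y i \<and> y i \<le> 1) \<longrightarrow>
                reduced_energy b p I a c d y \<le> reduced_energy b p I a c d x"
    using reduced_nehari_minus_max[OF assms] by blast
  define t where "t i = sqrt (x i)" for i
  have t: "\<forall>i\<in>I. 0 < t i \<and> t i \<le> 1 \<and> (t i)\<^sup>2 = x i"
    using x(1,2) unfolding t_def reduced_nehari_def by auto
  have "reduced_energy b p I a c d (\<lambda>i. (t i)\<^sup>2) = reduced_energy b p I a c d x"
    and "reduced_nehari b p I a c d (\<lambda>i. (t i)\<^sup>2)"
    using reduced_energy_cong[of I "\<lambda>i. (t i)\<^sup>2" x] reduced_nehari_cong[of I "\<lambda>i. (t i)\<^sup>2" x]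
      t x(1) by auto
  moreover have "\<forall>i\<in>I. s i = t i"
    if "\<forall>i\<in>I. 0 < s i \<and> s i \<le> 1" "reduced_nehari b p I a c d (\<lambda>i. (s i)\<^sup>2)" for s
  proof -
    have "\<forall>i\<in>I. (s i)\<^sup>2 \<le> 1" using that(1) by (meson less_imp_le power_le_one)
    then have "\<forall>i\<in>I. (s i)\<^sup>2 = x i" using unique that(2) by blast
    then show ?thesis using that(1) unfolding t_def by (metis real_sqrt_abs abs_of_pos)
  qed
  moreover have "reduced_energy b p I a c d (\<lambda>i. (s i)\<^sup>2) \<le> reduced_energy b p I a c d x"
    if "\<forall>i\<in>I. 0 \<le> s i \<and> s i \<le> 1" for s
    using max that by (simp add: power_le_one)
  ultimately show ?thesis using t x(3) by auto
qed

lemma nrm_sq_scaleR: "nrm_sq V B (\<lambda>x. t * u x) (\<lambda>x. t *\<^sub>R G x) = t\<^sup>2 * nrm_sq V B u G"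
proof -
  have "(norm (t *\<^sub>R G x))\<^sup>2 + V x * (t * u x)\<^sup>2 = t\<^sup>2 * ((norm (G x))\<^sup>2 + V x * (u x)\<^sup>2)" for x
    by (simp add: power_mult_distrib algebra_simps)
  then show ?thesis unfolding nrm_sq_def by simp
qed

lemma grad_sq_scaleR: "grad_sq B (\<lambda>x. t *\<^sub>R G x) = t\<^sup>2 * grad_sq B G"
  unfolding grad_sq_def by (simp add: power_mult_distrib)

lemma Lp_int_scale: "0 \<le> t \<Longrightarrow> Lp_int p B (\<lambda>x. t * u x) = t powr p * Lp_int p B u"
  unfolding Lp_int_def by (simp add: abs_mult powr_mult)

lemma grad_sq_nonneg: "0 \<le> grad_sq B G"
  unfolding grad_sq_def set_lebesgue_integral_def
  by (rule integral_nonneg_AE) (auto simp: indicator_def)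

lemma Lp_int_nonneg: "0 \<le> Lp_int p B u"
  unfolding Lp_int_def set_lebesgue_integral_def
  by (rule integral_nonneg_AE) (auto simp: indicator_def)

lemma not_AE_zero_if_Lp_int_pos:
  assumes "0 < Lp_int p B u"
  shows "\<not> (AE x in lborel. u x = 0)"
proof
  assume "AE x in lborel. u x = 0"
  then have "AE x in lborel. indicator B x *\<^sub>R \<bar>u x\<bar> powr p = (0::real)"
    by eventually_elim simp
  then have "Lp_int p B u = 0"
    unfolding Lp_int_def set_lebesgue_integral_def by (rule integral_eq_zero_AE)
  with assms show False by simp
qed

lemma test_fun_scale:
  assumes "t \<noteq> 0" "test_fun B \<phi> D"
  shows "test_fun B (\<lambda>x. t * \<phi> x) (\<lambda>x. t *\<^sub>R D x)"
proof -
  have support: "{x. t * \<phi> x \<noteq> 0} = {x. \<phi> x \<noteq> 0}" using assms(1) by auto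
  have "((\<lambda>x. t * \<phi> x) has_derivative (\<lambda>h. (t *\<^sub>R D x) \<bullet> h)) (at x)" for x
  proof -
    have "((\<lambda>x. t * \<phi> x) has_derivative (\<lambda>h. t * (D x \<bullet> h))) (at x)"
      using assms(2) unfolding test_fun_def by (auto intro: has_derivative_mult_right)
    then show ?thesis by (simp add: inner_scaleR_left)
  qed
  moreover have "continuous_on UNIV (\<lambda>x. t *\<^sub>R D x)"
    using assms(2) unfolding test_fun_def by (auto intro: continuous_intros)
  ultimately show ?thesis using assms(2) unfolding test_fun_def support by blast
qed

lemma H_sp_scale:
  assumes "t \<noteq> 0" "H_sp V B u G"
  shows "H_sp V B (\<lambda>x. t * u x) (\<lambda>x. t *\<^sub>R G x)"
proof -
  from assms(2) obtain \<phi> D where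
    meas: "u \<in> borel_measurable lborel" "G \<in> borel_measurable lborel"
    and supp: "\<forall>x. x \<notin> B \<longrightarrow> u x = 0" and radial: "\<forall>x y. norm x = norm y \<longrightarrow> u x = u y"
    and int_G: "set_integrable lborel B (\<lambda>x. (norm (G x))\<^sup>2)"
    and int_u: "set_integrable lborel B (\<lambda>x. V x * (u x)\<^sup>2)"
    and approx: "\<forall>n. test_fun B (\<phi> n) (D n) \<and>
       set_integrable lborel B (\<lambda>x. (norm (D n x - G x))\<^sup>2 + V x * (\<phi> n x - u x)\<^sup>2)"
    and lim: "(\<lambda>n. LINT x:B|lborel. (norm (D n x - G x))\<^sup>2 + V x * (\<phi> n x - u x)\<^sup>2) \<longlonglongrightarrow> 0"
    unfolding H_sp_def by blast
  have err_scale: "(norm (t *\<^sub>R D n x - t *\<^sub>R G x))\<^sup>2 + V x * (t * \<phi> n x - t * u x)\<^sup>2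
      = t\<^sup>2 * ((norm (D n x - G x))\<^sup>2 + V x * (\<phi> n x - u x)\<^sup>2)" for n x
  proof -
    have "t *\<^sub>R D n x - t *\<^sub>R G x = t *\<^sub>R (D n x - G x)" "t * \<phi> n x - t * u x = t * (\<phi> n x - u x)"
      by (simp_all add: scaleR_diff_right algebra_simps)
    then show ?thesis
      by (simp only: norm_scaleR power_mult_distrib power2_abs) (simp add: algebra_simps)
  qed
  show ?thesis
    unfolding H_sp_def
  proof (intro conjI exI[of _ "\<lambda>n x. t * \<phi> n x"] exI[of _ "\<lambda>n x. t *\<^sub>R D n x"] allI)
    show "(\<lambda>x. t * u x) \<in> borel_measurable lborel" "(\<lambda>x. t *\<^sub>R G x) \<in> borel_measurable lborel"
      using meas by measurable
    show "x \<notin> B \<longrightarrow> t * u x = 0" for x using supp by simp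
    show "norm x = norm y \<longrightarrow> t * u x = t * u y" for x y using radial by metis
    show "set_integrable lborel B (\<lambda>x. (norm (t *\<^sub>R G x))\<^sup>2)"
      using int_G by (simp add: power_mult_distrib)
    show "set_integrable lborel B (\<lambda>x. V x * (t * u x)\<^sup>2)"
      using set_integrable_mult_right[OF int_u, of "t\<^sup>2"] by (simp add: power_mult_distrib mult_ac)
    fix n
    show "test_fun B (\<lambda>x. t * \<phi> n x) (\<lambda>x. t *\<^sub>R D n x)"
      using test_fun_scale assms(1) approx by blast
    show "set_integrable lborel B (\<lambda>x. (norm (t *\<^sub>R D n x - t *\<^sub>R G x))\<^sup>2
        + V x * (t * \<phi> n x - t * u x)\<^sup>2)"
      unfolding err_scale using approx by simp
  next
    show "(\<lambda>n. LINT x:B|lborel. (norm (t *\<^sub>R D n x - t *\<^sub>R G x))\<^sup>2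
        + V x * (t * \<phi> n x - t * u x)\<^sup>2) \<longlonglongrightarrow> 0"
      unfolding err_scale using tendsto_mult_right_zero[OF lim, of "t\<^sup>2"] by simp
  qed
qed

lemma powr_power2_half: "0 \<le> s \<Longrightarrow> (s\<^sup>2) powr (p/2) = s powr p" for s p :: real
proof (cases "s = 0")
  case False
  assume "0 \<le> s"
  with False have "s\<^sup>2 = s powr 2" by (simp add: powr_realpow)
  then show ?thesis by (simp add: powr_powr)
qed simp

lemma add_square_sum_remove:
  fixes f :: "'a \<Rightarrow> real"
  assumes "finite I" "i \<in> I"
  shows "x + b * (f i)\<^sup>2 + b * f i * (\<Sum>j\<in>I - {i}. f j) = x + b * f i * (\<Sum>j\<in>I. f j)"
proof -
  have "(\<Sum>j\<in>I. f j) = f i + (\<Sum>j\<in>I - {i}. f j)" using assms by (rule sum.remove)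
  then show ?thesis by (simp add: power2_eq_square algebra_simps)
qed

lemma nehari_lhs_scale:
  assumes "finite I" "i \<in> I"
  shows "nrm_sq V (B i) (scU s u i) (scG s G i) + b * (grad_sq (B i) (scG s G i))\<^sup>2
           + b * grad_sq (B i) (scG s G i) * (\<Sum>j\<in>I - {i}. grad_sq (B j) (scG s G j))
         = (s i)\<^sup>2 * (nrm_sq V (B i) (u i) (G i)
             + b * grad_sq (B i) (G i) * (\<Sum>j\<in>I. grad_sq (B j) (G j) * (s j)\<^sup>2))"
proof -
  have "grad_sq (B j) (scG s G j) = grad_sq (B j) (G j) * (s j)\<^sup>2" for j
    unfolding scG_def grad_sq_scaleR by simp
  moreover have "nrm_sq V (B i) (scU s u i) (scG s G i) = (s i)\<^sup>2 * nrm_sq V (B i) (u i) (G i)"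
    unfolding scU_def scG_def by (rule nrm_sq_scaleR)
  ultimately show ?thesis
    using add_square_sum_remove[OF assms, of _ b "\<lambda>j. grad_sq (B j) (G j) * (s j)\<^sup>2"]
    by (simp add: power_mult_distrib algebra_simps)
qed

lemma Lp_int_scale_power2:
  "0 \<le> s i \<Longrightarrow> Lp_int p B (scU s u i) = Lp_int p B (u i) * ((s i)\<^sup>2) powr (p/2)"
  unfolding scU_def by (simp add: Lp_int_scale powr_power2_half mult.commute)

lemma E_b_scale:
  assumes a_def: "a = (\<lambda>i. nrm_sq V (annulus k r i) (u i) (G i))"
    and c_def: "c = (\<lambda>i. grad_sq (annulus k r i) (G i))"
    and d_def: "d = (\<lambda>i. Lp_int p (annulus k r i) (u i))"
    and s: "\<forall>i\<in>{1..k+1}. 0 \<le> s i"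
  shows "E_b V b p k r (scU s u) (scG s G) = reduced_energy b p {1..k+1} a c d (\<lambda>i. (s i)\<^sup>2)"
proof -
  have "(\<Sum>i=1..k+1. Lp_int p (annulus k r i) (scU s u i))
      = (\<Sum>i=1..k+1. Lp_int p (annulus k r i) (u i) * ((s i)\<^sup>2) powr (p/2))"
    using s by (intro sum.cong) (simp_all add: Lp_int_scale_power2)
  then show ?thesis
    unfolding E_b_def reduced_energy_def a_def c_def d_def
    by (simp add: scU_def scG_def nrm_sq_scaleR grad_sq_scaleR mult.commute)
qed

lemma N_minus_scale_iff:
  assumes a_def: "a = (\<lambda>i. nrm_sq V (annulus k r i) (u i) (G i))"
    and c_def: "c = (\<lambda>i. grad_sq (annulus k r i) (G i))"
    and d_def: "d = (\<lambda>i. Lp_int p (annulus k r i) (u i))"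
    and H: "H_k V k r u G" and s: "\<forall>i\<in>{1..k+1}. 0 < s i" and d_pos: "\<forall>i\<in>{1..k+1}. 0 < d i"
  shows "N_minus V b p k r (scU s u) (scG s G) \<longleftrightarrow>
    reduced_nehari b p {1..k+1} a c d (\<lambda>i. (s i)\<^sup>2) \<and>
    (\<forall>i\<in>{1..k+1}. (4 - p) * (d i * ((s i)\<^sup>2) powr (p/2)) < 2 * (a i * (s i)\<^sup>2))"
proof -
  let ?B = "annulus k r"
  have H_scaled: "H_k V k r (scU s u) (scG s G)"
    using H s unfolding H_k_def scU_def scG_def by (auto intro!: H_sp_scale)
  have Lp: "Lp_int p (?B i) (scU s u i) = d i * ((s i)\<^sup>2) powr (p/2)"
    if "i \<in> {1..k+1}" for i
    using s that unfolding d_def by (simp add: Lp_int_scale_power2 less_imp_le)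
  have nrm: "nrm_sq V (?B i) (scU s u i) (scG s G i) = a i * (s i)\<^sup>2" for i
    unfolding a_def by (simp add: scU_def scG_def nrm_sq_scaleR mult.commute)
  have nehari: "nrm_sq V (?B i) (scU s u i) (scG s G i) + b * (grad_sq (?B i) (scG s G i))\<^sup>2
        + b * grad_sq (?B i) (scG s G i) * (\<Sum>j\<in>{1..k+1} - {i}. grad_sq (?B j) (scG s G j))
        = Lp_int p (?B i) (scU s u i)
      \<longleftrightarrow> a i + b * c i * (\<Sum>j\<in>{1..k+1}. c j * (s j)\<^sup>2) = d i * ((s i)\<^sup>2) powr (p/2 - 1)"
    if i: "i \<in> {1..k+1}" for i
  proof -
    have "0 < (s i)\<^sup>2" using s i by force
    moreover have "((s i)\<^sup>2) powr (p/2) = (s i)\<^sup>2 * ((s i)\<^sup>2) powr (p/2 - 1)"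
      using calculation powr_add[of "(s i)\<^sup>2" 1 "p/2 - 1"] by simp
    ultimately show ?thesis
      unfolding nehari_lhs_scale[OF finite_atLeastAtMost i] Lp[OF i] a_def c_def
      by (simp add: mult_ac)
  qed
  have "\<not> (AE x in lborel. scU s u i x = 0)" if "i \<in> {1..k+1}" for i
  proof (rule not_AE_zero_if_Lp_int_pos)
    have "0 < d i" "0 < s i" using d_pos s that by auto
    then show "0 < Lp_int p (?B i) (scU s u i)" unfolding Lp[OF that] by simp
  qed
  with H_scaled nehari s show ?thesis
    unfolding N_minus_def reduced_nehari_def by (auto simp: Lp nrm mult_ac)
qed

theorem lemma2p3:
  fixes V :: "real^3 \<Rightarrow> real" and b p :: real and k :: nat and r :: "nat \<Rightarrow> real"
    and u :: "nat \<Rightarrow> real^3 \<Rightarrow> real" and G :: "nat \<Rightarrow> real^3 \<Rightarrow> real^3"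
  assumes "2 < p" "p < 4" "b > 0"
    and "continuous_on UNIV V" "\<forall>x y. norm x = norm y \<longrightarrow> V x = V y"
    and "bdd_below (range V)" "(INF x. V x) > 0"
    and "Lambda k r"
    and "H_k V k r u G"
    and "\<forall>i\<in>{1..k+1}. (4 - p) * Lp_int p (annulus k r i) (u i)
                         < 2 * nrm_sq V (annulus k r i) (u i) (G i)"
    and "\<forall>i\<in>{1..k+1}. nrm_sq V (annulus k r i) (u i) (G i) + b * (grad_sq (annulus k r i) (G i))\<^sup>2
            + b * grad_sq (annulus k r i) (G i) * (\<Sum>j\<in>{1..k+1} - {i}. grad_sq (annulus k r j) (G j))
          \<le> Lp_int p (annulus k r i) (u i)"
  shows "\<exists>t. (\<forall>i\<in>{1..k+1}. 0 < t i \<and> t i \<le> 1) \<and>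
             N_minus V b p k r (scU t u) (scG t G) \<and>
             (\<forall>s. (\<forall>i\<in>{1..k+1}. 0 < s i \<and> s i \<le> 1) \<and> N_minus V b p k r (scU s u) (scG s G)
                  \<longrightarrow> (\<forall>i\<in>{1..k+1}. s i = t i)) \<and>
             (\<forall>s. (\<forall>i\<in>{1..k+1}. 0 \<le> s i \<and> s i \<le> 1)
                  \<longrightarrow> E_b V b p k r (scU s u) (scG s G) \<le> E_b V b p k r (scU t u) (scG t G))"
proof -
  let ?I = "{1..k+1}"
  define a where "a = (\<lambda>i. nrm_sq V (annulus k r i) (u i) (G i))"
  define c where "c = (\<lambda>i. grad_sq (annulus k r i) (G i))"
  define d where "d = (\<lambda>i. Lp_int p (annulus k r i) (u i))"
  have c_nonneg: "\<forall>i\<in>?I. 0 \<le> c i" and d_nonneg: "\<forall>i\<in>?I. 0 \<le> d i"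
    unfolding c_def d_def by (simp_all add: grad_sq_nonneg Lp_int_nonneg)
  have minus: "\<forall>i\<in>?I. (4 - p) * d i < 2 * a i"
    using assms(10) unfolding a_def d_def by simp
  have le: "\<forall>i\<in>?I. a i + b * c i * (\<Sum>j\<in>?I. c j) \<le> d i"
  proof
    fix i assume i: "i \<in> ?I"
    show "a i + b * c i * (\<Sum>j\<in>?I. c j) \<le> d i"
      using bspec[OF assms(11) i] add_square_sum_remove[OF finite_atLeastAtMost i, of "a i" b c]
      unfolding a_def c_def d_def by linarith
  qed
  note b = less_imp_le[OF assms(3)]
  have d_pos: "\<forall>i\<in>?I. 0 < d i"
    using reduced_coefficients_pos[OF b assms(2) c_nonneg d_nonneg minus le] by blast
  obtain t where t: "\<forall>i\<in>?I. 0 < t i \<and> t i \<le> 1"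
    and t_nehari: "reduced_nehari b p ?I a c d (\<lambda>i. (t i)\<^sup>2)"
    and t_minus: "\<forall>i\<in>?I. (4 - p) * (d i * ((t i)\<^sup>2) powr (p/2)) < 2 * (a i * (t i)\<^sup>2)"
    and t_unique: "\<forall>s. (\<forall>i\<in>?I. 0 < s i \<and> s i \<le> 1) \<and> reduced_nehari b p ?I a c d (\<lambda>i. (s i)\<^sup>2)
      \<longrightarrow> (\<forall>i\<in>?I. s i = t i)"
    and t_max: "\<forall>s. (\<forall>i\<in>?I. 0 \<le> s i \<and> s i \<le> 1) \<longrightarrow>
      reduced_energy b p ?I a c d (\<lambda>i. (s i)\<^sup>2) \<le> reduced_energy b p ?I a c d (\<lambda>i. (t i)\<^sup>2)"
    using reduced_fibre_maximiser[OF finite_atLeastAtMost b assms(1,2) c_nonneg d_nonneg minus le]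
    by blast
  note N_minus_iff = N_minus_scale_iff[OF a_def c_def d_def assms(9) _ d_pos]
  note energy = E_b_scale[OF a_def c_def d_def]
  have t_pos: "\<forall>i\<in>?I. 0 < t i" and t_nonneg: "\<forall>i\<in>?I. 0 \<le> t i" using t by auto
  show ?thesis
  proof (intro exI conjI allI impI)
    show "\<forall>i\<in>?I. 0 < t i \<and> t i \<le> 1" by (rule t)
    show "N_minus V b p k r (scU t u) (scG t G)"
      unfolding N_minus_iff[OF t_pos] using t_nehari t_minus by (rule conjI)
  next
    fix s :: "nat \<Rightarrow> real"
    assume s: "(\<forall>i\<in>?I. 0 < s i \<and> s i \<le> 1) \<and> N_minus V b p k r (scU s u) (scG s G)"
    then have "\<forall>i\<in>?I. 0 < s i" by blast
    with s have "reduced_nehari b p ?I a c d (\<lambda>i. (s i)\<^sup>2)" using N_minus_iff by blast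
    with s show "\<forall>i\<in>?I. s i = t i" using t_unique by blast
  next
    fix s :: "nat \<Rightarrow> real" assume s: "\<forall>i\<in>?I. 0 \<le> s i \<and> s i \<le> 1"
    then have s_nonneg: "\<forall>i\<in>?I. 0 \<le> s i" by blast
    show "E_b V b p k r (scU s u) (scG s G) \<le> E_b V b p k r (scU t u) (scG t G)"
      unfolding energy[OF t_nonneg] energy[OF s_nonneg] using t_max s by blast
  qed
qed

end
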